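(* Let $N, N'$ be networks, $i \in V(N)$, $i' \in V(N')$, and $k \ge 0$. The following are equivalent: (a) $(N,i) \sim_k (N',i')$. (b) Agents $i$ in $N$ and $i'$ in $N'$ have the same initial local information and receive the same messages in each of the first $k$ rounds of the full-information protocol. (c) If the system is synchronous, then $i$ and $i'$ have the same initial local information and receive the same messages in each of the first $k$ rounds of every deterministic protocol.
   Context: A network is a directed, simple (no self-loops), connected, finite graph whose nodes (agents) are labeled by input values and whose edges are labeled by weights. For a network $N$: $V(N)$ is its set of agents, $E(N)$ its set of edges, $Out_N(i)=\{j : (i,j)\in E(N)\}$, $In_N(i)=\{j : (j,i)\in E(N)\}$, $in_N(i)$ is $i$'s input and $w_N(e)$ is the label of edge $e$. Communication is reliable (every message is eventually delivered, no duplication or corruption), no agent fails. Initially each agent knows only its local information: its own input, its number of outgoing links and the weights on them. Bisimilarity: $(N,i)\sim_0(N',i')$ iff $in_N(i)=in_{N'}(i')$ and there is a bijection $f^{out}:Out_N(i)\to Out_{N'}(i')$ with $w_N(i,j)=w_{N'}(i',f^{out}(j))$ for all $j$. For $k>0$, $(N,i)\sim_k(N',i')$ iff $(N,i)\sim_0(N',i')$ and there is a bijection $f^{in}:In_N(i)\to In_{N'}(i')$ such that for every $j\in In_N(i)$: $w_N(j,i)=w_{N'}(f^{in}(j),i')$; the edge $(j,i)$ is bidirectional (i.e. $(i,j)\in E(N)$ too) iff $(f^{in}(j),i')$ is bidirectional in $N'$; and $(N,j)\sim_{k-1}(N',f^{in}(j))$. The full-information protocol proceeds in rounds: in each round every agent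 sends to all its neighbors a message (stamped with the round number) describing all the information it has; an agent's round $k$ starts after it has received all round-$(k-1)$ messages from its neighbors. This round structure makes sense in both synchronous and asynchronous settings. *)

theory Defs
  imports Main "HOL-Library.Multiset"
begin

record ('v, 'x, 'w) network =
  nodes  :: "'v set"
  edges  :: "('v \<times> 'v) set"
  input  :: "'v \<Rightarrow> 'x"
  weight :: "'v \<times> 'v \<Rightarrow> 'w"

definition is_network :: "('v, 'x, 'w) network \<Rightarrow> bool" where
  "is_network N \<longleftrightarrow>
     finite (nodes N) \<and> nodes N \<noteq> {} \<and>
     edges N \<subseteq> nodes N \<times> nodes N \<and>
     (\<forall>v. (v, v) \<notin> edges N) \<and>
     (\<forall>u\<in>nodes N. \<forall>v\<in>nodes N. (u, v) \<in> (edges N)\<^sup>*)"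

definition Out :: "('v, 'x, 'w) network \<Rightarrow> 'v \<Rightarrow> 'v set" where
  "Out N i = {j. (i, j) \<in> edges N}"

definition In :: "('v, 'x, 'w) network \<Rightarrow> 'v \<Rightarrow> 'v set" where
  "In N i = {j. (j, i) \<in> edges N}"

definition bisim0 :: "('v, 'x, 'w) network \<Rightarrow> 'v \<Rightarrow> ('u, 'x, 'w) network \<Rightarrow> 'u \<Rightarrow> bool" where
  "bisim0 N i N' i' \<longleftrightarrow>
     input N i = input N' i' \<and>
     (\<exists>f. bij_betw f (Out N i) (Out N' i') \<and>
          (\<forall>j\<in>Out N i. weight N (i, j) = weight N' (i', f j)))"

primrec bisim :: "nat \<Rightarrow> ('v, 'x, 'w) network \<Rightarrow> 'v \<Rightarrow> ('u, 'x, 'w) network \<Rightarrow> 'u \<Rightarrow> bool" where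
  "bisim 0 N i N' i' = bisim0 N i N' i'"
| "bisim (Suc k) N i N' i' =
     (bisim0 N i N' i' \<and>
      (\<exists>f. bij_betw f (In N i) (In N' i') \<and>
           (\<forall>j\<in>In N i.
              weight N (j, i) = weight N' (f j, i') \<and>
              ((i, j) \<in> edges N \<longleftrightarrow> (i', f j) \<in> edges N') \<and>
              bisim k N j N' (f j))))"

text \<open>Initial local information: own input and the multiset of weights on the
  outgoing links (this determines the number of outgoing links).\<close>
definition out_weights :: "('v, 'x, 'w) network \<Rightarrow> 'v \<Rightarrow> 'w multiset" where
  "out_weights N i = image_mset (\<lambda>j. weight N (i, j)) (mset_set (Out N i))"

definition local_info :: "('v, 'x, 'w) network \<Rightarrow> 'v \<Rightarrow> 'x \<times> 'w multiset" where
  "local_info N i = (input N i, out_weights N i)"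

text \<open>The full information an agent has: its initial information, extended
  round by round with the multiset of received messages. Each received message
  is tagged with the weight of the incoming link and whether that link is
  bidirectional.\<close>
datatype ('x, 'w) fview =
    FInit 'x "'w multiset"
  | FStep "('x, 'w) fview" "('w \<times> bool \<times> ('x, 'w) fview) multiset"

text \<open>fi_view N r i: all information of agent i after r rounds of the
  full-information protocol (= the message i sends in round r+1).\<close>
primrec fi_view :: "('v, 'x, 'w) network \<Rightarrow> nat \<Rightarrow> 'v \<Rightarrow> ('x, 'w) fview" where
  "fi_view N 0 = (\<lambda>i. FInit (input N i) (out_weights N i))"
| "fi_view N (Suc r) = (\<lambda>i. FStep (fi_view N r i)
      {# (weight N (j, i), (i, j) \<in> edges N, fi_view N r j). j \<in># mset_set (In N i) #})"

text \<open>Messages received by agent i in round r (r \<ge> 1) of the full-information protocol.\<close>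
definition fi_recv :: "('v, 'x, 'w) network \<Rightarrow> nat \<Rightarrow> 'v \<Rightarrow> ('w \<times> bool \<times> ('x, 'w) fview) multiset" where
  "fi_recv N r i = {# (weight N (j, i), (i, j) \<in> edges N, fi_view N (r - 1) j). j \<in># mset_set (In N i) #}"

definition fi_same :: "nat \<Rightarrow> ('v, 'x, 'w) network \<Rightarrow> 'v \<Rightarrow> ('u, 'x, 'w) network \<Rightarrow> 'u \<Rightarrow> bool" where
  "fi_same k N i N' i' \<longleftrightarrow>
     local_info N i = local_info N' i' \<and> (\<forall>r\<in>{1..k}. fi_recv N r i = fi_recv N' r i')"

text \<open>A deterministic protocol: initial state from the local information, the
  message sent on an outgoing link as a function of the current state and the
  link's weight, and the state transition on the multiset of messages received
  in a round (tagged with incoming-link weight and bidirectionality).\<close>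
record ('x, 'w, 's, 'm) protocol =
  pinit  :: "'x \<Rightarrow> 'w multiset \<Rightarrow> 's"
  psend  :: "'s \<Rightarrow> 'w \<Rightarrow> 'm"
  ptrans :: "'s \<Rightarrow> ('w \<times> bool \<times> 'm) multiset \<Rightarrow> 's"

primrec p_state :: "('x, 'w, 's, 'm) protocol \<Rightarrow> ('v, 'x, 'w) network \<Rightarrow> nat \<Rightarrow> 'v \<Rightarrow> 's" where
  "p_state P N 0 = (\<lambda>i. pinit P (input N i) (out_weights N i))"
| "p_state P N (Suc r) = (\<lambda>i. ptrans P (p_state P N r i)
      {# (weight N (j, i), (i, j) \<in> edges N, psend P (p_state P N r j) (weight N (j, i))).
         j \<in># mset_set (In N i) #})"

text \<open>Messages received by agent i in round r (r \<ge> 1) of protocol P, synchronous run.\<close>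
definition p_recv :: "('x, 'w, 's, 'm) protocol \<Rightarrow> ('v, 'x, 'w) network \<Rightarrow> nat \<Rightarrow> 'v \<Rightarrow> ('w \<times> bool \<times> 'm) multiset" where
  "p_recv P N r i = {# (weight N (j, i), (i, j) \<in> edges N,
                        psend P (p_state P N (r - 1) j) (weight N (j, i))). j \<in># mset_set (In N i) #}"

definition sync_same :: "('x, 'w, 's, 'm) protocol \<Rightarrow> nat \<Rightarrow> ('v, 'x, 'w) network \<Rightarrow> 'v \<Rightarrow> ('u, 'x, 'w) network \<Rightarrow> 'u \<Rightarrow> bool" where
  "sync_same P k N i N' i' \<longleftrightarrow>
     local_info N i = local_info N' i' \<and> (\<forall>r\<in>{1..k}. p_recv P N r i = p_recv P N' r i')"

end

theory Submission
  imports Defs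
begin

text \<open>
  Both the messages received under the full-information protocol and the bisimilarity \<open>\<sim>\<^sub>k\<close>
  unfold along the incoming links, and equality of two finite multisets of labels is the
  same as a label-preserving bijection between the underlying sets. Hence, by induction
  on \<open>k\<close>, two agents receive the same full-information messages up to round \<open>k\<close> iff they
  are \<open>k\<close>-bisimilar. The full-information view determines the state, and so the messages,
  of any deterministic protocol in a synchronous run; conversely, the full-information
  protocol is itself a deterministic protocol.
\<close>

lemma image_mset_mset_set_eq_imp_bij:
  assumes "finite A" "finite B"
    and "image_mset g (mset_set A) = image_mset g' (mset_set B)"
  shows "\<exists>f. bij_betw f A B \<and> (\<forall>a\<in>A. g a = g' (f a))"
  using assms
proof (induction A arbitrary: B rule: finite_induct)
  case empty
  then have "B = {}" by (metis image_mset_is_empty_iff mset_set.empty mset_set_empty_iff)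
  then show ?case by (auto simp: bij_betw_def)
next
  case (insert a A)
  have eq: "image_mset g' (mset_set B) = add_mset (g a) (image_mset g (mset_set A))"
    using insert by simp
  then have "g a \<in># image_mset g' (mset_set B)" by simp
  then obtain b where b: "b \<in> B" "g' b = g a"
    using insert.prems(1) by auto
  then have "mset_set B = add_mset b (mset_set (B - {b}))"
    using insert.prems(1) by (simp add: mset_set.remove)
  then have "image_mset g' (mset_set (B - {b})) = image_mset g (mset_set A)"
    using eq b by simp
  then obtain f where f: "bij_betw f A (B - {b})" "\<forall>x\<in>A. g x = g' (f x)"
    using insert.IH insert.prems(1) by (metis finite_Diff)
  have "bij_betw (f(a := b)) (insert a A) B"
  proof -
    have "bij_betw (f(a := b)) A (B - {b})"
      using f(1) insert.hyps(2) bij_betw_cong[of A "f(a := b)" f] by fastforce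
    then have "bij_betw (f(a := b)) (A \<union> {a}) ((B - {b}) \<union> {b})"
      using notIn_Un_bij_betw3[of a A "f(a := b)" "B - {b}"] insert.hyps(2) by simp
    moreover have "(B - {b}) \<union> {b} = B" using b by auto
    ultimately show ?thesis by simp
  qed
  moreover have "\<forall>x\<in>insert a A. g x = g' ((f(a := b)) x)"
    using f(2) b insert.hyps(2) by auto
  ultimately show ?case by blast
qed

lemma image_mset_mset_set_eq_iff_bij:
  assumes "finite A" "finite B"
  shows "image_mset g (mset_set A) = image_mset g' (mset_set B) \<longleftrightarrow>
    (\<exists>f. bij_betw f A B \<and> (\<forall>a\<in>A. g a = g' (f a)))"
proof
  assume "image_mset g (mset_set A) = image_mset g' (mset_set B)"
  then show "\<exists>f. bij_betw f A B \<and> (\<forall>a\<in>A. g a = g' (f a))"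
    using image_mset_mset_set_eq_imp_bij assms by blast
next
  assume "\<exists>f. bij_betw f A B \<and> (\<forall>a\<in>A. g a = g' (f a))"
  then obtain f where f: "bij_betw f A B" "\<forall>a\<in>A. g a = g' (f a)" by blast
  have "image_mset g' (mset_set B) = image_mset g' (image_mset f (mset_set A))"
    using f(1) by (simp add: bij_betw_def image_mset_mset_set)
  also have "\<dots> = image_mset (g' \<circ> f) (mset_set A)"
    by (simp add: multiset.map_comp)
  also have "\<dots> = image_mset g (mset_set A)"
    using f(2) assms(1) by (intro image_mset_cong) auto
  finally show "image_mset g (mset_set A) = image_mset g' (mset_set B)" by simp
qed

lemma network_finite_edges: "is_network N \<Longrightarrow> finite (edges N)"
  unfolding is_network_def by (meson finite_SigmaI finite_subset)

lemma network_finite_In: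
  assumes "is_network N"
  shows "finite (In N i)"
proof (rule finite_subset)
  show "In N i \<subseteq> fst ` edges N" unfolding In_def by force
  show "finite (fst ` edges N)" using network_finite_edges[OF assms] by simp
qed

lemma network_finite_Out:
  assumes "is_network N"
  shows "finite (Out N i)"
proof (rule finite_subset)
  show "Out N i \<subseteq> snd ` edges N" unfolding Out_def by force
  show "finite (snd ` edges N)" using network_finite_edges[OF assms] by simp
qed

lemma bisim0_iff_local_info_eq:
  assumes "is_network N" "is_network N'"
  shows "bisim0 N i N' i' \<longleftrightarrow> local_info N i = local_info N' i'"
  unfolding bisim0_def local_info_def out_weights_def
  using image_mset_mset_set_eq_iff_bij[OF network_finite_Out[OF assms(1), of i]
      network_finite_Out[OF assms(2), of i'],
      where g = "\<lambda>j. weight N (i, j)" and g' = "\<lambda>j. weight N' (i', j)"]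
  by auto

lemma bisim_imp_bisim0: "bisim k N i N' i' \<Longrightarrow> bisim0 N i N' i'"
  by (cases k) auto

lemma bisim_Suc_imp_bisim: "bisim (Suc k) N i N' i' \<Longrightarrow> bisim k N i N' i'"
proof (induction k arbitrary: i i')
  case 0
  then show ?case by simp
next
  case (Suc k)
  then obtain f where "bisim0 N i N' i'" "bij_betw f (In N i) (In N' i')"
    "\<forall>j\<in>In N i. weight N (j, i) = weight N' (f j, i') \<and>
       ((i, j) \<in> edges N \<longleftrightarrow> (i', f j) \<in> edges N') \<and> bisim (Suc k) N j N' (f j)"
    by auto
  then show ?case using Suc.IH by (simp only: bisim.simps) blast
qed

lemma bisim_Suc_iff:
  "bisim (Suc k) N i N' i' \<longleftrightarrow> bisim k N i N' i' \<and>
     (\<exists>f. bij_betw f (In N i) (In N' i') \<and>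
        (\<forall>j\<in>In N i. weight N (j, i) = weight N' (f j, i') \<and>
           ((i, j) \<in> edges N \<longleftrightarrow> (i', f j) \<in> edges N') \<and>
           bisim k N j N' (f j)))"
  using bisim_Suc_imp_bisim[of k N i N' i'] bisim_imp_bisim0[of k N i N' i']
  by (auto simp only: bisim.simps)

lemma fi_view_eq_iff_bisim:
  assumes "is_network N" "is_network N'"
  shows "fi_view N k i = fi_view N' k i' \<longleftrightarrow> bisim k N i N' i'"
proof (induction k arbitrary: i i')
  case 0
  then show ?case by (simp add: bisim0_iff_local_info_eq[OF assms] local_info_def)
next
  case (Suc k)
  show ?case
    unfolding bisim_Suc_iff
    using image_mset_mset_set_eq_iff_bij[OF network_finite_In[OF assms(1), of i]
        network_finite_In[OF assms(2), of i'],
      where g = "\<lambda>j. (weight N (j, i), (i, j) \<in> edges N, fi_view N k j)"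
        and g' = "\<lambda>j. (weight N' (j, i'), (i', j) \<in> edges N', fi_view N' k j)"]
    by (simp add: Suc.IH)
qed

lemma fi_same_iff_fi_view_eq: "fi_same k N i N' i' \<longleftrightarrow> fi_view N k i = fi_view N' k i'"
proof (induction k)
  case 0
  then show ?case by (simp add: fi_same_def local_info_def)
next
  case (Suc k)
  have "{1..Suc k} = insert (Suc k) {1..k}" by auto
  then have "fi_same (Suc k) N i N' i' \<longleftrightarrow>
      fi_same k N i N' i' \<and> fi_recv N (Suc k) i = fi_recv N' (Suc k) i'"
    unfolding fi_same_def by auto
  then show ?case using Suc.IH by (simp add: fi_recv_def)
qed

primrec fview_state :: "('x, 'w, 's, 'm) protocol \<Rightarrow> ('x, 'w) fview \<Rightarrow> 's" where
  "fview_state P (FInit x ws) = pinit P x ws"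
| "fview_state P (FStep v msgs) = ptrans P (fview_state P v)
     (image_mset (\<lambda>(w, b, s). (w, b, psend P s w))
       (image_mset (map_prod id (map_prod id (fview_state P))) msgs))"

lemma p_state_eq_fview_state: "p_state P N r i = fview_state P (fi_view N r i)"
  by (induction r arbitrary: i) (simp_all add: multiset.map_comp comp_def)

lemma p_recv_eq_image_mset_fi_recv:
  "p_recv P N r i = image_mset (\<lambda>(w, b, v). (w, b, psend P (fview_state P v) w)) (fi_recv N r i)"
  by (simp add: p_recv_def fi_recv_def multiset.map_comp comp_def p_state_eq_fview_state)

lemma fi_same_imp_sync_same: "fi_same k N i N' i' \<Longrightarrow> sync_same P k N i N' i'"
  by (simp add: fi_same_def sync_same_def p_recv_eq_image_mset_fi_recv)

definition full_info_protocol :: "('x, 'w, ('x, 'w) fview, ('x, 'w) fview) protocol" where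
  "full_info_protocol = \<lparr>pinit = FInit, psend = (\<lambda>s w. s), ptrans = FStep\<rparr>"

lemma p_state_full_info_protocol: "p_state full_info_protocol N r = fi_view N r"
  by (induction r) (auto simp: full_info_protocol_def)

lemma sync_same_full_info_protocol_iff:
  "sync_same full_info_protocol k N i N' i' \<longleftrightarrow> fi_same k N i N' i'"
  by (simp add: sync_same_def fi_same_def p_recv_def fi_recv_def p_state_full_info_protocol)
     (simp add: full_info_protocol_def)

theorem lemma2p2:
  fixes N :: "('v, 'x, 'w) network" and N' :: "('u, 'x, 'w) network"
    and i :: 'v and i' :: 'u and k :: nat
  assumes "is_network N" and "is_network N'"
    and "i \<in> nodes N" and "i' \<in> nodes N'"
  shows "(bisim k N i N' i' \<longleftrightarrow> fi_same k N i N' i')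
       \<and> (bisim k N i N' i' \<longrightarrow> (\<forall>P :: ('x, 'w, 's, 'm) protocol. sync_same P k N i N' i'))
       \<and> ((\<forall>P :: ('x, 'w, ('x, 'w) fview, ('x, 'w) fview) protocol. sync_same P k N i N' i')
            \<longrightarrow> bisim k N i N' i')"
proof -
  have bisim_iff: "bisim k N i N' i' \<longleftrightarrow> fi_same k N i N' i'"
    using fi_same_iff_fi_view_eq[of k N i N' i'] fi_view_eq_iff_bisim[OF assms(1,2), of k i i']
    by simp
  moreover have "bisim k N i N' i' \<longrightarrow> (\<forall>P :: ('x, 'w, 's, 'm) protocol. sync_same P k N i N' i')"
    by (simp add: bisim_iff fi_same_imp_sync_same)
  moreover have "(\<forall>P :: ('x, 'w, ('x, 'w) fview, ('x, 'w) fview) protocol. sync_same P k N i N' i')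
      \<longrightarrow> bisim k N i N' i'"
    using bisim_iff sync_same_full_info_protocol_iff[of k N i N' i'] by blast
  ultimately show ?thesis by blast
qed

end
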